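(* Let $H$ be a graph with an $\ell$-colouring $\phi_2$ such that every $\phi_2$-repetitive lazy walk in $H$ is boring. Then for every graph $G$, $\pi^*(G\boxtimes H)\le \ell\,\pi^*(G)$.
   Context: All graphs are finite and simple. A lazy walk in a graph $G$ is a sequence of vertices $v_1,\dots,v_m$ such that for each $i<m$, either $v_iv_{i+1}\in E(G)$ or $v_i=v_{i+1}$. For a colouring $\phi$ of $V(G)$, a lazy walk $v_1,\dots,v_{2t}$ is $\phi$-repetitive if $\phi(v_i)=\phi(v_{i+t})$ for each $i\in\{1,\dots,t\}$; it is boring if $v_i=v_{i+t}$ for every $i\in\{1,\dots,t\}$. A colouring $\phi$ is strongly nonrepetitive if for every $\phi$-repetitive lazy walk $v_1,\dots,v_{2t}$ there exists $i\in\{1,\dots,t\}$ with $v_i=v_{i+t}$. $\pi^*(G)$ denotes the minimum number of colours in a strongly nonrepetitive colouring of $G$. The strong product $A\boxtimes B$ has vertex set $V(A)\times V(B)$, with distinct $(v,x),(w,y)$ adjacent iff ($v=w$ and $xy\in E(B)$) or ($x=y$ and $vw\in E(A)$) or ($vw\in E(A)$ and $xy\in E(B)$). *)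

theory Defs
  imports Main
begin

definition graph :: "'a set \<Rightarrow> ('a \<Rightarrow> 'a \<Rightarrow> bool) \<Rightarrow> bool" where
  "graph V E \<longleftrightarrow> finite V \<and>
     (\<forall>x y. E x y \<longrightarrow> x \<in> V \<and> y \<in> V \<and> x \<noteq> y \<and> E y x)"

text \<open>Lazy walk v_1..v_m (as a list, 0-indexed).\<close>
definition lazy_walk :: "'a set \<Rightarrow> ('a \<Rightarrow> 'a \<Rightarrow> bool) \<Rightarrow> 'a list \<Rightarrow> bool" where
  "lazy_walk V E ws \<longleftrightarrow> set ws \<subseteq> V \<and>
     (\<forall>i. Suc i < length ws \<longrightarrow> E (ws ! i) (ws ! Suc i) \<or> ws ! i = ws ! Suc i)"

definition repetitive :: "('a \<Rightarrow> 'c) \<Rightarrow> 'a list \<Rightarrow> bool" where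
  "repetitive \<phi> ws \<longleftrightarrow> (\<exists>t. t \<ge> 1 \<and> length ws = 2 * t \<and>
     (\<forall>i<t. \<phi> (ws ! i) = \<phi> (ws ! (i + t))))"

definition boring :: "'a list \<Rightarrow> bool" where
  "boring ws \<longleftrightarrow> (\<forall>i < length ws div 2. ws ! i = ws ! (i + length ws div 2))"

definition strongly_nonrepetitive :: "'a set \<Rightarrow> ('a \<Rightarrow> 'a \<Rightarrow> bool) \<Rightarrow> ('a \<Rightarrow> 'c) \<Rightarrow> bool" where
  "strongly_nonrepetitive V E \<phi> \<longleftrightarrow>
     (\<forall>ws. lazy_walk V E ws \<and> repetitive \<phi> ws \<longrightarrow>
        (\<exists>i < length ws div 2. ws ! i = ws ! (i + length ws div 2)))"

definition pi_star :: "'a set \<Rightarrow> ('a \<Rightarrow> 'a \<Rightarrow> bool) \<Rightarrow> nat" where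
  "pi_star V E = (LEAST k. \<exists>\<phi> :: 'a \<Rightarrow> nat.
      (\<forall>v\<in>V. \<phi> v < k) \<and> strongly_nonrepetitive V E \<phi>)"

definition strong_prod :: "('a \<Rightarrow> 'a \<Rightarrow> bool) \<Rightarrow> ('b \<Rightarrow> 'b \<Rightarrow> bool) \<Rightarrow>
    ('a \<times> 'b) \<Rightarrow> ('a \<times> 'b) \<Rightarrow> bool" where
  "strong_prod EA EB p q \<longleftrightarrow> p \<noteq> q \<and>
     ((fst p = fst q \<and> EB (snd p) (snd q)) \<or>
      (snd p = snd q \<and> EA (fst p) (fst q)) \<or>
      (EA (fst p) (fst q) \<and> EB (snd p) (snd q)))"

end

theory Submission
  imports Defs
begin

text \<open>Colour a vertex (v, x) of G \<boxtimes> H by the pair of colours of v and x. A repetitive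
  lazy walk in the product projects to lazy walks in G and H that are repetitive for the
  respective colourings. Its projection to H is boring by hypothesis, so the walk and its
  second half agree in the H-coordinate everywhere; strong nonrepetitiveness in G yields
  an index where they also agree in the G-coordinate. Pairs of colours below k and l are
  then encoded injectively as numbers below k l.\<close>

lemma lazy_walk_strong_prod_fst:
  "lazy_walk (VA \<times> VB) (strong_prod EA EB) ws \<Longrightarrow> lazy_walk VA EA (map fst ws)"
  unfolding lazy_walk_def strong_prod_def by auto

lemma lazy_walk_strong_prod_snd:
  "lazy_walk (VA \<times> VB) (strong_prod EA EB) ws \<Longrightarrow> lazy_walk VB EB (map snd ws)"
  unfolding lazy_walk_def strong_prod_def by auto

lemma repetitive_map:
  assumes "repetitive \<psi> ws"
    and "\<And>x y. x \<in> set ws \<Longrightarrow> y \<in> set ws \<Longrightarrow> \<psi> x = \<psi> y \<Longrightarrow> \<phi> (f x) = \<phi> (f y)"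
  shows "repetitive \<phi> (map f ws)"
proof -
  obtain t where t: "t \<ge> 1" "length ws = 2 * t" "\<forall>i<t. \<psi> (ws ! i) = \<psi> (ws ! (i + t))"
    using assms(1) unfolding repetitive_def by blast
  have "\<phi> (f (ws ! i)) = \<phi> (f (ws ! (i + t)))" if "i < t" for i
    using assms(2) t that by simp
  with t show ?thesis
    unfolding repetitive_def by (intro exI[of _ t]) auto
qed

lemma strongly_nonrepetitive_comp:
  assumes "strongly_nonrepetitive V E \<phi>" and "inj_on g (\<phi> ` V)"
  shows "strongly_nonrepetitive V E (g \<circ> \<phi>)"
  unfolding strongly_nonrepetitive_def
proof (intro allI impI)
  fix ws assume ws: "lazy_walk V E ws \<and> repetitive (g \<circ> \<phi>) ws"
  have "set ws \<subseteq> V" using ws unfolding lazy_walk_def by blast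
  with assms(2) have "repetitive \<phi> (map id ws)"
    by (intro repetitive_map[OF conjunct2[OF ws]]) (auto dest: inj_onD)
  with ws assms(1) show "\<exists>i < length ws div 2. ws ! i = ws ! (i + length ws div 2)"
    unfolding strongly_nonrepetitive_def by simp
qed

lemma strongly_nonrepetitive_inj_on:
  "inj_on \<phi> V \<Longrightarrow> strongly_nonrepetitive V E \<phi>"
  unfolding strongly_nonrepetitive_def
proof (intro allI impI)
  fix ws assume ws: "lazy_walk V E ws \<and> repetitive \<phi> ws" and inj: "inj_on \<phi> V"
  then obtain t where t: "t \<ge> 1" "length ws = 2 * t" "\<phi> (ws ! 0) = \<phi> (ws ! (0 + t))"
    unfolding repetitive_def by fastforce
  moreover have "ws ! 0 \<in> V" "ws ! (0 + t) \<in> V"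
    using ws t unfolding lazy_walk_def by (auto dest!: nth_mem)
  ultimately show "\<exists>i < length ws div 2. ws ! i = ws ! (i + length ws div 2)"
    using inj by (intro exI[of _ 0]) (auto dest: inj_onD)
qed

lemma pi_star_attained:
  assumes "graph V E"
  obtains \<phi> :: "'a \<Rightarrow> nat"
  where "\<forall>v\<in>V. \<phi> v < pi_star V E" and "strongly_nonrepetitive V E \<phi>"
proof -
  have "finite V" using assms unfolding graph_def by blast
  then obtain h where "bij_betw h V {0..<card V}" using ex_bij_betw_finite_nat by blast
  hence "\<exists>\<phi> :: 'a \<Rightarrow> nat. (\<forall>v\<in>V. \<phi> v < card V) \<and> strongly_nonrepetitive V E \<phi>"
    by (intro exI[of _ h]) (auto simp: bij_betw_def strongly_nonrepetitive_inj_on)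
  hence "\<exists>\<phi> :: 'a \<Rightarrow> nat. (\<forall>v\<in>V. \<phi> v < pi_star V E) \<and> strongly_nonrepetitive V E \<phi>"
    unfolding pi_star_def by (rule LeastI)
  with that show thesis by blast
qed

lemma pi_star_le:
  "\<forall>v\<in>V. \<phi> v < k \<Longrightarrow> strongly_nonrepetitive V E \<phi> \<Longrightarrow> pi_star V E \<le> k"
  unfolding pi_star_def by (rule Least_le) blast

lemma strongly_nonrepetitive_strong_prod:
  assumes G: "strongly_nonrepetitive VG EG \<phi>1"
    and H: "\<forall>ws. lazy_walk VH EH ws \<and> repetitive \<phi>2 ws \<longrightarrow> boring ws"
  shows "strongly_nonrepetitive (VG \<times> VH) (strong_prod EG EH)
           (\<lambda>p. (\<phi>1 (fst p), \<phi>2 (snd p)))"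
  unfolding strongly_nonrepetitive_def
proof (intro allI impI)
  fix ws assume ws: "lazy_walk (VG \<times> VH) (strong_prod EG EH) ws
                       \<and> repetitive (\<lambda>p. (\<phi>1 (fst p), \<phi>2 (snd p))) ws"
  define t where "t = length ws div 2"
  have "lazy_walk VH EH (map snd ws)" "repetitive \<phi>2 (map snd ws)"
    using ws by (auto intro: lazy_walk_strong_prod_snd repetitive_map)
  with H have "boring (map snd ws)" by blast
  hence snd_eq: "snd (ws ! i) = snd (ws ! (i + t))" if "i < t" for i
    using that unfolding boring_def t_def by (simp add: add.commute less_half_sum)
  have "lazy_walk VG EG (map fst ws)" "repetitive \<phi>1 (map fst ws)"
    using ws by (auto intro: lazy_walk_strong_prod_fst repetitive_map)
  with G obtain i where i: "i < t" "fst (ws ! i) = fst (ws ! (i + t))"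
    unfolding strongly_nonrepetitive_def t_def by fastforce
  with snd_eq have "ws ! i = ws ! (i + t)" by (simp add: prod_eq_iff)
  with i show "\<exists>i < length ws div 2. ws ! i = ws ! (i + length ws div 2)"
    by (auto simp: t_def[symmetric])
qed

lemma inj_on_pair_code:
  "inj_on (\<lambda>(a, b). a + k * b :: nat) ({..<k} \<times> B)"
proof (rule inj_onI, clarsimp)
  fix a b c d :: nat assume "a < k" "c < k" and eq: "a + k * b = c + k * d"
  hence "a = c" by (metis mod_mult_self2 mod_less)
  with eq \<open>a < k\<close> show "a = c \<and> b = d" by auto
qed

theorem mainTheorem6:
  fixes VG :: "'a set" and EG :: "'a \<Rightarrow> 'a \<Rightarrow> bool"
    and VH :: "'b set" and EH :: "'b \<Rightarrow> 'b \<Rightarrow> bool"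
    and \<phi>2 :: "'b \<Rightarrow> nat" and l :: nat
  assumes "graph VG EG" and "graph VH EH"
    and "\<forall>v\<in>VH. \<phi>2 v < l"
    and "\<forall>ws. lazy_walk VH EH ws \<and> repetitive \<phi>2 ws \<longrightarrow> boring ws"
  shows "pi_star (VG \<times> VH) (strong_prod EG EH) \<le> l * pi_star VG EG"
proof -
  define k where "k = pi_star VG EG"
  obtain \<phi>1 where \<phi>1: "\<forall>v\<in>VG. \<phi>1 v < k" "strongly_nonrepetitive VG EG \<phi>1"
    using pi_star_attained[OF assms(1)] unfolding k_def by blast
  define code :: "nat \<times> nat \<Rightarrow> nat" where "code = (\<lambda>(a, b). a + k * b)"
  define \<psi> where "\<psi> = (\<lambda>p. (\<phi>1 (fst p), \<phi>2 (snd p)))"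
  have sn: "strongly_nonrepetitive (VG \<times> VH) (strong_prod EG EH) (code \<circ> \<psi>)"
  proof (rule strongly_nonrepetitive_comp)
    show "strongly_nonrepetitive (VG \<times> VH) (strong_prod EG EH) \<psi>"
      unfolding \<psi>_def using \<phi>1(2) assms(4) by (rule strongly_nonrepetitive_strong_prod)
    show "inj_on code (\<psi> ` (VG \<times> VH))"
      unfolding code_def \<psi>_def using \<phi>1(1)
      by (intro inj_on_subset[OF inj_on_pair_code[of k UNIV]]) auto
  qed
  have bound: "\<forall>p\<in>VG \<times> VH. (code \<circ> \<psi>) p < l * k"
  proof
    fix p assume "p \<in> VG \<times> VH"
    hence "\<phi>1 (fst p) < k" "\<phi>2 (snd p) + 1 \<le> l" using \<phi>1(1) assms(3) by auto
    hence "\<phi>1 (fst p) + k * \<phi>2 (snd p) < k * (\<phi>2 (snd p) + 1)" by simp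
    also have "\<dots> \<le> k * l" using \<open>\<phi>2 (snd p) + 1 \<le> l\<close> by (rule mult_le_mono2)
    finally show "(code \<circ> \<psi>) p < l * k" unfolding code_def \<psi>_def by (simp add: mult.commute)
  qed
  show ?thesis using pi_star_le[OF bound sn] unfolding k_def .
qed

end
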